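(* Let $\mathfrak{B}$ be a linear time-invariant behavior with signal space $\mathbb{R}^{\mathrm{w}}$ whose restriction to the interval $[k-L^-,k+L^+]$ (with $L^-+L^++1=L$) is represented as $\hat{w}_{[k-L^-,k+L^+]}=\mathcal{F} z_k$ for a matrix $\mathcal{F}$ and arbitrary vector $z_k$. Let $\mathfrak{B}_{sV}$ be the dissipative behavior with manifest variable $(s,V)$ described by $V(k)-V(k-1)\leq s(k)$ for all $k$, with $V\geq 0$, and let the interconnection between $\mathfrak{B}$ and $\mathfrak{B}_{sV}$ be given by the quadratic difference forms $s(k)=Q_\Phi(w)(k)$, $V(k)=Q_\Psi(w)(k)$ of orders $K_\Phi$ and $K_\Psi$ with symmetric coefficient matrices $\widetilde{\Phi}$ and $\widetilde{\Psi}$. Assume that $L^-=\max\{K_\Phi,K_\Psi+1\}$. If $L^->\mathtt{L}(\mathfrak{B})$ (the lag of $\mathfrak{B}$), $\widetilde{\Psi}\geq0$ and, for all $l\in\{0,1,\ldots,L^+\}$, $$z_k^\top\mathcal{F}_l^\top (\widehat{\Phi}-\nabla\widehat{\Psi})\mathcal{F}_lz_k\geq0$$ holds for any $z_k$, where $\mathcal{F}_l$ denotes the sub-matrix of $\mathcal{F}$ corresponding to the trajectory segment $\hat{w}_{[k-L^-+l,k+l]}$, then $\mathfrak{B}=\pi_{w}(\mathfrak{B}_{ps})$, where $\mathfrak{B}_{ps}=(\mathfrak{B}\times\mathfrak{B}_{sV})\cap\mathfrak{B}_{s}^\Pi$. In other words, $\mathfrak{B}$ is $(Q_\Phi(w),Q_\Psi(w))$-dissipative.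 Furthermore, if $L^+=0$, then the family of inequalities $z_k^\top\mathcal{F}_l^\top (\widehat{\Phi}-\nabla\widehat{\Psi})\mathcal{F}_lz_k\geq0$ reduces to the single linear matrix inequality $$\mathcal{F}^\top (\widehat{\Phi}-\nabla\widehat{\Psi})\mathcal{F}\geq0.$$
   Context: Discrete time axis $\mathbb{T}\subset\mathbb{Z}^{\geq0}$. A dynamical system is a triple $(\mathbb{T},\mathbb{W},\mathfrak{B})$ with behavior $\mathfrak{B}\subset\mathbb{W}^{\mathbb{T}}$; $\hat{w}_{[a,b]}=\mathrm{col}(w(a),\ldots,w(b))$ and $\mathfrak{B}_{|[a,b]}$ is the behavior restricted to $[a,b]$. The lag $\mathtt{L}(\mathfrak{B})$ is the smallest integer such that $w_{|[k,k+\mathtt{L}(\mathfrak{B})]}\in\mathfrak{B}_{|[k,k+\mathtt{L}(\mathfrak{B})]}$ for all $k$ implies $w\in\mathfrak{B}$. $\pi_w$ denotes projection of a behavior onto the variable $w$. A quadratic difference form (QdF) of order $K_\Phi$ is $Q_\Phi(w)(k)=\hat{w}_{[k-K_\Phi,k]}^\top\widetilde{\Phi}\hat{w}_{[k-K_\Phi,k]}$ with symmetric $\widetilde{\Phi}$. The rate of change of storage $Q_{\nabla\Psi}(w)(k)=Q_\Psi(w)(k)-Q_\Psi(w)(k-1)$ has coefficient matrix $\nabla\widetilde{\Psi}=\mathrm{diag}(0_{\mathrm{w}},\widetilde{\Psi})-\mathrm{diag}(\widetilde{\Psi},0_{\mathrm{w}})$. Here $\widehat{\Phi}=\mathrm{diag}(0_{k_\Phi\mathrm{w}},\widetilde{\Phi})$,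 $\nabla\widehat{\Psi}=\mathrm{diag}(0_{k_\Psi\mathrm{w}},\nabla\widetilde{\Psi})$, $k_\Phi=L^--K_\Phi$, $k_\Psi=L^--K_\Psi-1$. $\mathfrak{B}_s^\Pi$ is the (virtual) interconnection behavior on $(w,s,V)$ defined by $s=Q_\Phi(w)$, $V=Q_\Psi(w)$. *)

theory Defs
  imports Complex_Main
begin

text \<open>Time axis T = nat. A signal value in R^w is a function
nat => real vanishing at indices >= w; a trajectory is nat => (nat => real).
Vectors/matrices of explicit size are functions nat => real / nat => nat => real
whose entries outside the stated size are irrelevant.\<close>

definition sig_traj :: "nat \<Rightarrow> (nat \<Rightarrow> nat \<Rightarrow> real) \<Rightarrow> bool" where
  "sig_traj w x \<longleftrightarrow> (\<forall>t i. w \<le> i \<longrightarrow> x t i = 0)"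

text \<open>Stacked window col(w(a),...,w(b)), of size (b+1-a)*w.\<close>
definition stack :: "nat \<Rightarrow> nat \<Rightarrow> nat \<Rightarrow> (nat \<Rightarrow> nat \<Rightarrow> real) \<Rightarrow> nat \<Rightarrow> real" where
  "stack w a b x = (\<lambda>j. if j < (b + 1 - a) * w then x (a + j div w) (j mod w) else 0)"

definition mulv :: "nat \<Rightarrow> nat \<Rightarrow> (nat \<Rightarrow> nat \<Rightarrow> real) \<Rightarrow> (nat \<Rightarrow> real) \<Rightarrow> nat \<Rightarrow> real" where
  "mulv m n F z = (\<lambda>i. if i < m then (\<Sum>j<n. F i j * z j) else 0)"

definition quadf :: "nat \<Rightarrow> (nat \<Rightarrow> nat \<Rightarrow> real) \<Rightarrow> (nat \<Rightarrow> real) \<Rightarrow> real" where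
  "quadf n M x = (\<Sum>i<n. \<Sum>j<n. x i * M i j * x j)"

definition symm :: "nat \<Rightarrow> (nat \<Rightarrow> nat \<Rightarrow> real) \<Rightarrow> bool" where
  "symm n M \<longleftrightarrow> (\<forall>i<n. \<forall>j<n. M i j = M j i)"

definition psd :: "nat \<Rightarrow> (nat \<Rightarrow> nat \<Rightarrow> real) \<Rightarrow> bool" where
  "psd n M \<longleftrightarrow> (\<forall>x. quadf n M x \<ge> 0)"

definition congr :: "nat \<Rightarrow> (nat \<Rightarrow> nat \<Rightarrow> real) \<Rightarrow> (nat \<Rightarrow> nat \<Rightarrow> real) \<Rightarrow> nat \<Rightarrow> nat \<Rightarrow> real" where
  "congr N M F = (\<lambda>i j. \<Sum>a<N. \<Sum>b<N. F a i * M a b * F b j)"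

definition blk :: "nat \<Rightarrow> nat \<Rightarrow> (nat \<Rightarrow> nat \<Rightarrow> real) \<Rightarrow> nat \<Rightarrow> nat \<Rightarrow> real" where
  "blk off n M = (\<lambda>i j. if off \<le> i \<and> i < off + n \<and> off \<le> j \<and> j < off + n
                        then M (i - off) (j - off) else 0)"

text \<open>Coefficient matrix of the rate of change: diag(0_w, Psi) - diag(Psi, 0_w),
  Psi of size (K+1)w, result of size (K+2)w.\<close>
definition nabla_coeff :: "nat \<Rightarrow> nat \<Rightarrow> (nat \<Rightarrow> nat \<Rightarrow> real) \<Rightarrow> nat \<Rightarrow> nat \<Rightarrow> real" where
  "nabla_coeff w K Psi = (\<lambda>i j. blk w ((K + 1) * w) Psi i j - blk 0 ((K + 1) * w) Psi i j)"

text \<open>Quadratic difference form of order K: Q(x)(k) = x_[k-K,k]^T Phi x_[k-K,k]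
  (meaningful for k >= K).\<close>
definition qdf :: "nat \<Rightarrow> nat \<Rightarrow> (nat \<Rightarrow> nat \<Rightarrow> real) \<Rightarrow> (nat \<Rightarrow> nat \<Rightarrow> real) \<Rightarrow> nat \<Rightarrow> real" where
  "qdf w K Phi x k = quadf ((K + 1) * w) Phi (stack w (k - K) k x)"

definition linear_behavior :: "nat \<Rightarrow> (nat \<Rightarrow> nat \<Rightarrow> real) set \<Rightarrow> bool" where
  "linear_behavior w B \<longleftrightarrow> (\<forall>x\<in>B. sig_traj w x) \<and> (\<lambda>t i. 0) \<in> B \<and>
     (\<forall>x\<in>B. \<forall>y\<in>B. \<forall>c d::real. (\<lambda>t i. c * x t i + d * y t i) \<in> B)"

definition time_invariant :: "(nat \<Rightarrow> nat \<Rightarrow> real) set \<Rightarrow> bool" where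
  "time_invariant B \<longleftrightarrow> (\<forall>x\<in>B. (\<lambda>t. x (t + 1)) \<in> B)"

definition lag_ok :: "nat \<Rightarrow> (nat \<Rightarrow> nat \<Rightarrow> real) set \<Rightarrow> nat \<Rightarrow> bool" where
  "lag_ok w B ell \<longleftrightarrow> (\<forall>x. sig_traj w x \<longrightarrow>
      (\<forall>k. \<exists>y\<in>B. \<forall>t\<in>{k..k+ell}. y t = x t) \<longrightarrow> x \<in> B)"

definition lag :: "nat \<Rightarrow> (nat \<Rightarrow> nat \<Rightarrow> real) set \<Rightarrow> nat" where
  "lag w B = (LEAST ell. lag_ok w B ell)"

definition B_sV :: "((nat \<Rightarrow> real) \<times> (nat \<Rightarrow> real)) set" where
  "B_sV = {(s, V). (\<forall>k\<ge>1. V k - V (k - 1) \<le> s k) \<and> (\<forall>k. V k \<ge> 0)}"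

text \<open>Interconnection s = Q_Phi(w), V = Q_Psi(w), imposed wherever the QdFs are defined.\<close>
definition B_Pi :: "nat \<Rightarrow> nat \<Rightarrow> (nat \<Rightarrow> nat \<Rightarrow> real) \<Rightarrow> nat \<Rightarrow> (nat \<Rightarrow> nat \<Rightarrow> real) \<Rightarrow>
    ((nat \<Rightarrow> nat \<Rightarrow> real) \<times> (nat \<Rightarrow> real) \<times> (nat \<Rightarrow> real)) set" where
  "B_Pi w KPhi Phi KPsi Psi = {(x, s, V). (\<forall>k\<ge>KPhi. s k = qdf w KPhi Phi x k) \<and>
                                           (\<forall>k\<ge>KPsi. V k = qdf w KPsi Psi x k)}"

definition B_ps :: "nat \<Rightarrow> (nat \<Rightarrow> nat \<Rightarrow> real) set \<Rightarrow> nat \<Rightarrow> (nat \<Rightarrow> nat \<Rightarrow> real) \<Rightarrow> nat \<Rightarrow>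
    (nat \<Rightarrow> nat \<Rightarrow> real) \<Rightarrow> ((nat \<Rightarrow> nat \<Rightarrow> real) \<times> (nat \<Rightarrow> real) \<times> (nat \<Rightarrow> real)) set" where
  "B_ps w B KPhi Phi KPsi Psi =
     {(x, s, V). x \<in> B \<and> (s, V) \<in> B_sV} \<inter> B_Pi w KPhi Phi KPsi Psi"

definition proj_w :: "('a \<times> 'b) set \<Rightarrow> 'a set" where
  "proj_w S = fst ` S"

end

theory Submission
  imports Defs
begin

text \<open>For x in B and k >= L-, the window of x on [k - L-, k] equals F_0 z for some z. The
  padded matrices only read the sub-windows on which Q_Phi(x)(k), Q_Psi(x)(k) and
  Q_Psi(x)(k - 1) live, so the quadratic form of PhiHat - NablaPsiHat on this window is
  Q_Phi(x)(k) - (Q_Psi(x)(k) - Q_Psi(x)(k - 1)); its nonnegativity is the dissipation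
  inequality from time L- on. Before that, the interconnection fixes s only from K_Phi and V
  only from K_Psi on: s is left free below K_Phi, and V is continued backwards from
  Q_Psi(x)(K_Psi), growing by |Q_Phi(x)(k)| at each step, which keeps it nonnegative and
  makes every earlier step dissipative. For L+ = 0 the single window condition is the
  quadratic form of F^T (PhiHat - NablaPsiHat) F.\<close>

lemma quadf_cong: "(\<And>i. i < n \<Longrightarrow> u i = v i) \<Longrightarrow> quadf n A u = quadf n A v"
  unfolding quadf_def by (intro sum.cong refl) auto

lemma quadf_diff: "quadf n (\<lambda>i j. A i j - B i j) v = quadf n A v - quadf n B v"
  unfolding quadf_def by (simp add: algebra_simps sum_subtractf)

lemma sum_lessThan_support_interval:
  fixes g :: "nat \<Rightarrow> real"
  assumes "off + m \<le> n" and "\<And>i. i < n \<Longrightarrow> \<not> (off \<le> i \<and> i < off + m) \<Longrightarrow> g i = 0"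
  shows "(\<Sum>i<n. g i) = (\<Sum>i<m. g (off + i))"
proof -
  have "(\<Sum>i<n. g i) = (\<Sum>i\<in>{off..<off + m}. g i)"
    using assms by (intro sum.mono_neutral_right) auto
  also have "\<dots> = (\<Sum>i<m. g (off + i))"
    using sum.shift_bounds_nat_ivl[of g 0 off m] by (simp add: atLeast0LessThan add.commute)
  finally show ?thesis .
qed

lemma quadf_blk:
  assumes "off + m \<le> n"
  shows "quadf n (blk off m A) v = quadf m A (\<lambda>i. v (off + i))"
proof -
  have "quadf n (blk off m A) v = (\<Sum>i<m. \<Sum>j<n. v (off + i) * blk off m A (off + i) j * v j)"
    unfolding quadf_def using assms by (intro sum_lessThan_support_interval) (auto simp: blk_def)
  also have "\<dots> = (\<Sum>i<m. \<Sum>j<m. v (off + i) * blk off m A (off + i) (off + j) * v (off + j))"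
    using assms by (intro sum.cong refl sum_lessThan_support_interval) (auto simp: blk_def)
  finally show ?thesis
    unfolding quadf_def blk_def by simp
qed

lemma stack_subwindow:
  assumes "a \<le> a'" and "b' \<le> b" and "i < (b' + 1 - a') * w"
  shows "stack w a b x ((a' - a) * w + i) = stack w a' b' x i"
proof -
  have "0 < (b' + 1 - a') * w"
    using assms(3) by linarith
  then have "0 < w" and "a' \<le> b'"
    by simp_all
  have "(a' - a) * w + i < (a' - a) * w + (b' + 1 - a') * w"
    using assms(3) by simp
  also have "\<dots> = (b' + 1 - a) * w"
    using assms(1) \<open>a' \<le> b'\<close> by (simp add: add_mult_distrib[symmetric])
  also have "\<dots> \<le> (b + 1 - a) * w"
    using assms(2) by (intro mult_right_mono) auto
  finally show ?thesis
    unfolding stack_def using assms \<open>0 < w\<close> by simp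
qed

lemma mulv_prefix: "i < n \<Longrightarrow> n \<le> m \<Longrightarrow> mulv m nz F z i = mulv n nz F z i"
  unfolding mulv_def by simp

lemma quadf_mulv: "quadf N M (mulv N nz F z) = quadf nz (congr N M F) z"
proof -
  have "quadf N M (mulv N nz F z)
      = (\<Sum>a<N. \<Sum>b<N. \<Sum>i<nz. \<Sum>j<nz. z i * (F a i * M a b * F b j) * z j)"
    unfolding quadf_def mulv_def by (simp add: sum_distrib_left sum_distrib_right mult_ac)
  also have "\<dots> = (\<Sum>i<nz. \<Sum>j<nz. \<Sum>a<N. \<Sum>b<N. z i * (F a i * M a b * F b j) * z j)"
    by (subst sum.swap, subst (2) sum.swap, subst (3) sum.swap, subst (2) sum.swap) simp
  finally show ?thesis
    unfolding quadf_def congr_def by (simp add: sum_distrib_left sum_distrib_right)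
qed

lemma qdf_diff: "qdf w K (\<lambda>i j. A i j - B i j) x k = qdf w K A x k - qdf w K B x k"
  unfolding qdf_def by (rule quadf_diff)

lemma qdf_blk_pad:
  assumes "K \<le> L" and "L \<le> k"
  shows "qdf w L (blk ((L - K) * w) ((K + 1) * w) A) x k = qdf w K A x k"
proof -
  have "(L - K) * w + (K + 1) * w \<le> (L + 1) * w"
    using assms(1) by (simp add: add_mult_distrib[symmetric])
  then have "qdf w L (blk ((L - K) * w) ((K + 1) * w) A) x k
      = quadf ((K + 1) * w) A (\<lambda>i. stack w (k - L) k x ((L - K) * w + i))"
    unfolding qdf_def by (rule quadf_blk)
  also have "\<dots> = qdf w K A x k"
    unfolding qdf_def using assms stack_subwindow[of "k - L" "k - K" k k _ w x]
    by (intro quadf_cong) simp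
  finally show ?thesis .
qed

lemma qdf_nabla_coeff:
  assumes "K < k"
  shows "qdf w (K + 1) (nabla_coeff w K Psi) x k = qdf w K Psi x k - qdf w K Psi x (k - 1)"
proof -
  have "qdf w (K + 1) (blk w ((K + 1) * w) Psi) x k = qdf w K Psi x k"
    using qdf_blk_pad[of K "K + 1" k w Psi x] assms by simp
  moreover have "qdf w (K + 1) (blk 0 ((K + 1) * w) Psi) x k = qdf w K Psi x (k - 1)"
  proof -
    have "qdf w (K + 1) (blk 0 ((K + 1) * w) Psi) x k
        = quadf ((K + 1) * w) Psi (\<lambda>i. stack w (k - (K + 1)) k x (0 + i))"
      unfolding qdf_def by (rule quadf_blk) simp
    also have "\<dots> = qdf w K Psi x (k - 1)"
      unfolding qdf_def using assms stack_subwindow[of "k - (K + 1)" "k - (K + 1)" "k - 1" k _ w x]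
      by (intro quadf_cong) (simp add: Suc_diff_Suc)
    finally show ?thesis .
  qed
  ultimately show ?thesis
    unfolding nabla_coeff_def qdf_diff by simp
qed

lemma qdf_supply_minus_rate:
  assumes "KPhi \<le> L" and "KPsi < L" and "L \<le> k"
  shows "qdf w L (\<lambda>i j. blk ((L - KPhi) * w) ((KPhi + 1) * w) Phi i j
                      - blk ((L - KPsi - 1) * w) ((KPsi + 2) * w) (nabla_coeff w KPsi Psi) i j) x k
       = qdf w KPhi Phi x k - (qdf w KPsi Psi x k - qdf w KPsi Psi x (k - 1))"
  using qdf_blk_pad[of KPhi L k w Phi x] qdf_blk_pad[of "KPsi + 1" L k w "nabla_coeff w KPsi Psi" x]
    qdf_nabla_coeff[of KPsi k w Psi x] assms
  by (simp add: qdf_diff)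

lemma qdf_window_mulv:
  assumes "stack w (k - L) (k + P) x = mulv ((L + P + 1) * w) nz F z" and "L \<le> k"
  shows "qdf w L M x k = quadf ((L + 1) * w) M (mulv ((L + 1) * w) nz F z)"
  unfolding qdf_def
proof (rule quadf_cong)
  fix i assume i: "i < (L + 1) * w"
  then have "stack w (k - L) k x i = stack w (k - L) (k + P) x i"
    using stack_subwindow[of "k - L" "k - L" k "k + P" i w x] assms(2) by simp
  also have "\<dots> = mulv ((L + 1) * w) nz F z i"
    using mulv_prefix[OF i, of "(L + P + 1) * w"] by (simp add: assms(1))
  finally show "stack w (k - L) k x i = mulv ((L + 1) * w) nz F z i" .
qed

lemma storage_extension:
  fixes phi psi :: "nat \<Rightarrow> real"
  assumes psi_nonneg: "\<And>k. KPsi \<le> k \<Longrightarrow> 0 \<le> psi k"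
    and rate: "\<And>k. L \<le> k \<Longrightarrow> psi k - psi (k - 1) \<le> phi k"
    and L: "L \<le> max KPhi (KPsi + 1)"
  shows "\<exists>s V. (s, V) \<in> B_sV \<and> (\<forall>k\<ge>KPhi. s k = phi k) \<and> (\<forall>k\<ge>KPsi. V k = psi k)"
proof -
  define V where "V k = (if KPsi \<le> k then psi k else psi KPsi + (\<Sum>j\<in>{k<..KPsi}. \<bar>phi j\<bar>))" for k
  define s where "s k = (if KPhi \<le> k then phi k else V k - V (k - 1))" for k
  have V_early: "V k = psi KPsi + (\<Sum>j\<in>{k<..KPsi}. \<bar>phi j\<bar>)" if "k \<le> KPsi" for k
    using that by (cases "k = KPsi") (simp_all add: V_def)
  have "0 \<le> V k" for k
    using psi_nonneg by (simp add: V_def sum_nonneg add_nonneg_nonneg)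
  moreover have "V k - V (k - 1) \<le> s k" if "1 \<le> k" for k
  proof (cases "KPhi \<le> k")
    case True
    show ?thesis
    proof (cases "k \<le> KPsi")
      case early: True
      have "{k - 1<..KPsi} = insert k {k<..KPsi}"
        using that early by auto
      then have "V (k - 1) = V k + \<bar>phi k\<bar>"
        using early V_early[of k] V_early[of "k - 1"] by simp
      then show ?thesis
        using True by (simp add: s_def)
    next
      case False
      then have "KPsi \<le> k" and "KPsi \<le> k - 1" and "L \<le> k"
        using True L by auto
      then show ?thesis
        using True rate[of k] by (simp add: s_def V_def)
    qed
  qed (simp add: s_def)
  ultimately show ?thesis
    unfolding B_sV_def by (intro exI[of _ s] exI[of _ V]) (simp add: s_def V_def)
qed

lemma proj_B_ps_eq:
  assumes "psd ((KPsi + 1) * w) Psi"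
    and "L \<le> max KPhi (KPsi + 1)"
    and rate: "\<And>x k. x \<in> B \<Longrightarrow> L \<le> k \<Longrightarrow>
               qdf w KPsi Psi x k - qdf w KPsi Psi x (k - 1) \<le> qdf w KPhi Phi x k"
  shows "B = proj_w (B_ps w B KPhi Phi KPsi Psi)"
proof
  show "B \<subseteq> proj_w (B_ps w B KPhi Phi KPsi Psi)"
  proof
    fix x assume "x \<in> B"
    have "0 \<le> qdf w KPsi Psi x k" for k
      using assms(1) by (simp add: psd_def qdf_def)
    then obtain s V where "(s, V) \<in> B_sV" "\<forall>k\<ge>KPhi. s k = qdf w KPhi Phi x k"
      "\<forall>k\<ge>KPsi. V k = qdf w KPsi Psi x k"
      using storage_extension[of KPsi "qdf w KPsi Psi x" L "qdf w KPhi Phi x" KPhi]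
        rate[OF \<open>x \<in> B\<close>] assms(2) by blast
    then have "(x, s, V) \<in> B_ps w B KPhi Phi KPsi Psi"
      using \<open>x \<in> B\<close> by (simp add: B_ps_def B_Pi_def)
    then show "x \<in> proj_w (B_ps w B KPhi Phi KPsi Psi)"
      unfolding proj_w_def by force
  qed
qed (auto simp: proj_w_def B_ps_def)

theorem proposition9:
  fixes w nz Lm Lp KPhi KPsi :: nat
    and B :: "(nat \<Rightarrow> nat \<Rightarrow> real) set"
    and F Phi Psi :: "nat \<Rightarrow> nat \<Rightarrow> real"
  defines "N \<equiv> (Lm + 1) * w"
  defines "PhiHat \<equiv> blk ((Lm - KPhi) * w) ((KPhi + 1) * w) Phi"
  defines "NPsiHat \<equiv> blk ((Lm - KPsi - 1) * w) ((KPsi + 2) * w) (nabla_coeff w KPsi Psi)"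
  defines "M \<equiv> (\<lambda>i j. PhiHat i j - NPsiHat i j)"
  defines "Fl \<equiv> (\<lambda>l::nat. \<lambda>i j. F (l * w + i) j)"
  assumes lin: "linear_behavior w B"
    and ti: "time_invariant B"
    and repr: "\<forall>k\<ge>Lm. {stack w (k - Lm) (k + Lp) x | x. x \<in> B}
                        = range (mulv ((Lm + Lp + 1) * w) nz F)"
    and symPhi: "symm ((KPhi + 1) * w) Phi"
    and symPsi: "symm ((KPsi + 1) * w) Psi"
    and Lm_def: "Lm = max KPhi (KPsi + 1)"
    and lag_exists: "\<exists>ell. lag_ok w B ell"
    and lag_lt: "lag w B < Lm"
    and Psi_psd: "psd ((KPsi + 1) * w) Psi"
    and ineq: "\<forall>l\<le>Lp. \<forall>z. quadf N M (mulv N nz (Fl l) z) \<ge> 0"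
  shows "B = proj_w (B_ps w B KPhi Phi KPsi Psi) \<and>
         (Lp = 0 \<longrightarrow>
            ((\<forall>l\<le>Lp. \<forall>z. quadf N M (mulv N nz (Fl l) z) \<ge> 0)
               \<longleftrightarrow> psd nz (congr N M F)))"
proof
  have "qdf w KPsi Psi x k - qdf w KPsi Psi x (k - 1) \<le> qdf w KPhi Phi x k"
    if "x \<in> B" and "Lm \<le> k" for x k
  proof -
    obtain z where z: "stack w (k - Lm) (k + Lp) x = mulv ((Lm + Lp + 1) * w) nz F z"
      using repr \<open>x \<in> B\<close> \<open>Lm \<le> k\<close> by blast
    then have "qdf w Lm M x k = quadf N M (mulv N nz (Fl 0) z)"
      using \<open>Lm \<le> k\<close> by (simp add: qdf_window_mulv N_def Fl_def)
    moreover have "qdf w Lm M x k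
        = qdf w KPhi Phi x k - (qdf w KPsi Psi x k - qdf w KPsi Psi x (k - 1))"
      unfolding M_def PhiHat_def NPsiHat_def
      using Lm_def \<open>Lm \<le> k\<close> by (intro qdf_supply_minus_rate) auto
    moreover have "0 \<le> quadf N M (mulv N nz (Fl 0) z)"
      using ineq by blast
    ultimately show ?thesis
      by linarith
  qed
  then show "B = proj_w (B_ps w B KPhi Phi KPsi Psi)"
    using Psi_psd Lm_def by (intro proj_B_ps_eq[where L = Lm]) auto
  show "Lp = 0 \<longrightarrow> ((\<forall>l\<le>Lp. \<forall>z. quadf N M (mulv N nz (Fl l) z) \<ge> 0) \<longleftrightarrow> psd nz (congr N M F))"
    by (simp add: Fl_def psd_def quadf_mulv)
qed

end
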